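(* Let $A\subseteq\mathbb{R}$ be a closed set with smallest element $\theta_*$, and let $c:A\to\mathbb{R}$ be nondecreasing and left-continuous with $c(\theta_* )=0$ and $c(x)>0$ for all $x\in A$ with $x>\theta_*$; if $A$ is unbounded, assume further that $\inf\{c(x)/x : x\in A,\ x\ge y\}\uparrow\infty$ as $y\uparrow\infty$. Define $\phi(y)=\sup_{x\in A}\{yx-c(x)\}$ for $y\ge 0$, and let $\psi(y)$ be the smallest element of $A$ attaining this supremum. Then: (i) $\psi$ is right-continuous at $0$; (ii) $\phi_*\equiv-\inf\{\phi(y):y\ge0\}<\infty$ if and only if $A$ has a nonnegative element; (iii) if $A$ is unbounded, then $\psi(y)\to\infty$ and $\phi(y)\to\infty$ as $y\to\infty$; (iv) if $A$ is bounded, then $\psi(y)\to\theta^*$ as $y\to\infty$, where $\theta^*\equiv\sup A$.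
   Context: Under the stated assumptions on $A$ and $c$, for every $y\ge0$ the supremum defining $\phi(y)$ is finite and the set of maximizers in $A$ is nonempty and has a smallest element, so $\psi(y)=\inf\arg\max_{x\in A}\{yx-c(x)\}$ is well defined. It is also known that $\psi$ is nondecreasing and left-continuous on $[0,\infty)$ and $\phi(y)=\int_0^y\psi(u)\,du$ for $y\ge 0$. *)

theory Defs
  imports "HOL-Analysis.Analysis"
begin

definition phi :: "real set \<Rightarrow> (real \<Rightarrow> real) \<Rightarrow> real \<Rightarrow> real" where
  "phi A c y = (SUP x\<in>A. y * x - c x)"

definition psi :: "real set \<Rightarrow> (real \<Rightarrow> real) \<Rightarrow> real \<Rightarrow> real" where
  "psi A c y = Inf {x \<in> A. y * x - c x = phi A c y}"

end

(*
  A nondecreasing, left-continuous cost c is lower semicontinuous on the closed set A, and the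
  growth condition pushes y x - c x below its value at \<theta> for large x.  Hence for y \<ge> 0 the
  supremum phi y is attained on the compact set A \<inter> [\<theta>, B]; so psi y, the infimum of the
  nonempty set of maximisers, inherits every lower bound valid for all maximisers.

  Comparing a maximiser x with a competitor z \<in> A gives z - c z / y \<le> x, which pushes psi y
  towards sup A (finite or infinite) as y \<rightarrow> \<infinity>.  Comparing it with \<theta> gives
  c x \<le> y (x - \<theta>); for small y the maximisers stay bounded, and c is bounded away from 0 on
  A \<inter> [\<theta> + \<epsilon>, \<infinity>) by closedness, so psi y \<rightarrow> \<theta> as y \<rightarrow> 0+.  Finally phi y \<ge> -c x
  for any x \<ge> 0 in A, while if A \<subseteq> (-\<infinity>, 0) then phi y \<le> y max A \<rightarrow> -\<infinity>.
*)
theory Submission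
  imports Defs
begin

definition lower_semicontinuous_on :: "'a::topological_space set \<Rightarrow> ('a \<Rightarrow> real) \<Rightarrow> bool" where
  "lower_semicontinuous_on K g \<longleftrightarrow> (\<forall>l\<in>K. \<forall>t<g l. \<forall>\<^sub>F x in at l within K. t < g x)"

lemma lower_semicontinuous_on_add_continuous:
  assumes g: "lower_semicontinuous_on K g" and h: "continuous_on K h"
  shows "lower_semicontinuous_on K (\<lambda>x. g x + h x)"
  unfolding lower_semicontinuous_on_def
proof (intro ballI allI impI)
  fix l t assume l: "l \<in> K" and t: "t < g l + h l"
  define d where "d = (g l + h l - t) / 2"
  have "d > 0" using t by (simp add: d_def)
  have "\<forall>\<^sub>F x in at l within K. g l - d < g x"
    using g l \<open>d > 0\<close> unfolding lower_semicontinuous_on_def by simp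
  moreover have "\<forall>\<^sub>F x in at l within K. h l - d < h x"
    using h l \<open>d > 0\<close> unfolding continuous_on_def by (auto intro: order_tendstoD)
  ultimately show "\<forall>\<^sub>F x in at l within K. t < g x + h x"
    by eventually_elim (simp add: d_def field_simps)
qed

lemma mono_on_left_continuous_imp_lower_semicontinuous_on:
  fixes c :: "real \<Rightarrow> real"
  assumes mono: "mono_on A c" and left: "\<forall>x\<in>A. continuous (at x within (A \<inter> {..x})) c"
  shows "lower_semicontinuous_on A c"
  unfolding lower_semicontinuous_on_def
proof (intro ballI allI impI)
  fix l t assume l: "l \<in> A" and t: "t < c l"
  have "\<forall>\<^sub>F x in at l within A \<inter> {..l}. t < c x"
    using left l t unfolding continuous_within by (auto intro: order_tendstoD)
  moreover have "\<forall>\<^sub>F x in at l within A \<inter> {l..}. t < c x"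
    using t mono_onD[OF mono l]
    by (auto simp: eventually_at_filter intro!: always_eventually intro: order.strict_trans2)
  moreover have "A = A \<inter> {..l} \<union> A \<inter> {l..}" by auto
  ultimately show "\<forall>\<^sub>F x in at l within A. t < c x"
    by (metis eventually_within_Un)
qed

lemma closed_sublevel_lower_semicontinuous:
  assumes K: "closed K" and g: "lower_semicontinuous_on K g"
  shows "closed {x \<in> K. g x \<le> t}"
  unfolding closed_limpt
proof (intro allI impI)
  fix l assume lim: "l islimpt {x \<in> K. g x \<le> t}"
  then have "l \<in> K"
    using K closed_limpt islimpt_subset by (metis (no_types, lifting) mem_Collect_eq subsetI)
  moreover have "g l \<le> t"
  proof (rule ccontr)
    assume "\<not> g l \<le> t"
    then have "\<forall>\<^sub>F x in at l within K. t < g x"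
      using g \<open>l \<in> K\<close> unfolding lower_semicontinuous_on_def by simp
    then have "\<forall>\<^sub>F x in at l. x \<notin> {x \<in> K. g x \<le> t}"
      by (auto simp: eventually_at_filter elim: eventually_mono)
    then show False using lim by (simp add: islimpt_iff_eventually)
  qed
  ultimately show "l \<in> {x \<in> K. g x \<le> t}" by simp
qed

lemma lower_semicontinuous_on_attains_inf:
  fixes g :: "'a::t2_space \<Rightarrow> real"
  assumes K: "compact K" "K \<noteq> {}" and g: "lower_semicontinuous_on K g"
  obtains x where "x \<in> K" "\<And>z. z \<in> K \<Longrightarrow> g x \<le> g z"
proof -
  define S where "S z = {x \<in> K. g x \<le> g z}" for z
  have "K \<inter> \<Inter>(S ` K) \<noteq> {}"
  proof (rule compact_fip[THEN iffD1, rule_format, OF K(1)])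
    show "closed a" if "a \<in> S ` K" for a
      using that closed_sublevel_lower_semicontinuous[OF compact_imp_closed[OF K(1)] g]
      by (auto simp: S_def)
    fix B assume "B \<subseteq> S ` K" "finite B"
    then obtain Z where Z: "Z \<subseteq> K" "finite Z" "B = S ` Z"
      by (meson finite_subset_image)
    show "K \<inter> \<Inter>B \<noteq> {}"
    proof (cases "Z = {}")
      case True
      then show ?thesis using Z K(2) by simp
    next
      case False
      then obtain z where "z \<in> Z" "\<forall>z'\<in>Z. g z \<le> g z'"
        using ex_min_if_finite[of "g ` Z"] Z(2) by (auto simp: not_less)
      then have "z \<in> K \<inter> \<Inter>B" using Z by (auto simp: S_def)
      then show ?thesis by blast
    qed
  qed
  then show thesis by (auto simp: S_def intro: that)
qed

lemma psi_le_argmax: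
  assumes "bdd_below A" "x \<in> A" "y * x - c x = phi A c y"
  shows "psi A c y \<le> x"
  unfolding psi_def using assms by (auto intro: cInf_lower bdd_below_mono)

lemma le_psi_argmaxI:
  assumes "x \<in> A" "y * x - c x = phi A c y"
    and "\<And>x. x \<in> A \<Longrightarrow> y * x - c x = phi A c y \<Longrightarrow> z \<le> x"
  shows "z \<le> psi A c y"
  unfolding psi_def using assms by (auto intro: cInf_greatest)

lemma phi_le:
  assumes "A \<noteq> {}" "\<And>x. x \<in> A \<Longrightarrow> y * x - c x \<le> M"
  shows "phi A c y \<le> M"
  unfolding phi_def using assms by (rule cSUP_least)

lemma phi_eq_argmax:
  assumes "x0 \<in> A" "\<And>x. x \<in> A \<Longrightarrow> y * x - c x \<le> y * x0 - c x0"
  shows "phi A c y = y * x0 - c x0"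
  unfolding phi_def using assms by (auto intro: cSup_eq_maximum)

locale admissible_cost =
  fixes A :: "real set" and c :: "real \<Rightarrow> real" and \<theta> :: real
  assumes closed_A: "closed A"
    and theta_in: "\<theta> \<in> A"
    and theta_min: "\<forall>x\<in>A. \<theta> \<le> x"
    and mono: "mono_on A c"
    and left_continuous: "\<forall>x\<in>A. continuous (at x within (A \<inter> {..x})) c"
    and cost_theta: "c \<theta> = 0"
    and growth: "\<not> bounded A \<Longrightarrow>
       filterlim (\<lambda>y. Inf ((\<lambda>x. c x / x) ` {x \<in> A. y \<le> x})) at_top at_top"
begin

lemma cost_nonneg: "x \<in> A \<Longrightarrow> 0 \<le> c x"
  using mono_onD[OF mono theta_in] theta_min cost_theta by force

lemma bdd_below_A: "bdd_below A"
  using theta_min by (auto intro: bdd_belowI)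

lemma unbounded_exists_gt:
  assumes "\<not> bounded A"
  obtains x where "x \<in> A" "a < x"
proof -
  have "\<not> A \<subseteq> {\<theta>..a}"
    using assms bounded_subset bounded_closed_interval by blast
  then show thesis using theta_min that by force
qed

lemma eventually_objective_less_theta:
  assumes y: "y \<ge> 0"
  shows "\<forall>\<^sub>F x in at_top. x \<in> A \<longrightarrow> y * x - c x < y * \<theta>"
proof (cases "bounded A")
  case True
  then have "\<forall>x\<in>A. x \<le> Sup A"
    by (simp add: bounded_imp_bdd_above cSup_upper)
  then show ?thesis
    by (intro eventually_mono[OF eventually_gt_at_top[of "Sup A"]]) force
next
  case False
  let ?ratio_inf = "\<lambda>t. Inf ((\<lambda>x. c x / x) ` {x \<in> A. t \<le> x})"
  have "\<forall>\<^sub>F t in at_top. y + 1 \<le> ?ratio_inf t"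
    using growth[OF False] by (simp add: filterlim_at_top)
  moreover have "\<forall>\<^sub>F t in at_top. 0 < t \<and> - (y * \<theta>) < t"
    by (intro eventually_conj eventually_gt_at_top)
  ultimately show ?thesis
  proof eventually_elim
    case (elim t)
    show ?case
    proof
      assume t: "t \<in> A"
      have "bdd_below ((\<lambda>x. c x / x) ` {x \<in> A. t \<le> x})"
        using elim cost_nonneg by (auto intro!: bdd_belowI[of _ 0])
      then have "?ratio_inf t \<le> c t / t"
        using t by (auto intro: cInf_lower)
      with elim have "y + 1 \<le> c t / t"
        by linarith
      with elim have "(y + 1) * t \<le> c t"
        by (simp add: pos_le_divide_eq)
      with elim show "y * t - c t < y * \<theta>"
        by (simp add: algebra_simps)
    qed
  qed
qed

lemma objective_attains_max:
  assumes y: "y \<ge> 0"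
  obtains x0 where "x0 \<in> A" "\<And>x. x \<in> A \<Longrightarrow> y * x - c x \<le> y * x0 - c x0"
proof -
  obtain B where B: "\<And>x. B \<le> x \<Longrightarrow> x \<in> A \<Longrightarrow> y * x - c x < y * \<theta>"
    using eventually_objective_less_theta[OF y] by (auto simp: eventually_at_top_linorder)
  define K where "K = A \<inter> {..max B \<theta>}"
  have "K \<subseteq> {\<theta>..max B \<theta>}"
    using theta_min by (auto simp: K_def)
  then have "bounded K"
    using bounded_subset bounded_closed_interval by blast
  then have "compact K"
    using closed_A by (simp add: K_def compact_eq_bounded_closed closed_Int)
  have "\<theta> \<in> K"
    using theta_in by (simp add: K_def)
  have "lower_semicontinuous_on K (\<lambda>x. c x + - (y * x))"
  proof (intro lower_semicontinuous_on_add_continuous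
      mono_on_left_continuous_imp_lower_semicontinuous_on ballI)
    show "mono_on K c"
      using mono by (rule mono_on_subset) (simp add: K_def)
    fix x assume "x \<in> K"
    then have "continuous (at x within A \<inter> {..x}) c"
      using left_continuous by (simp add: K_def)
    then show "continuous (at x within K \<inter> {..x}) c"
      by (rule continuous_within_subset) (auto simp: K_def)
  qed (intro continuous_intros)
  then obtain x0 where x0: "x0 \<in> K" "\<And>z. z \<in> K \<Longrightarrow> c x0 + - (y * x0) \<le> c z + - (y * z)"
    using lower_semicontinuous_on_attains_inf[OF \<open>compact K\<close>] \<open>\<theta> \<in> K\<close> by blast
  show thesis
  proof (rule that)
    show "x0 \<in> A"
      using x0(1) by (simp add: K_def)
    fix x assume x: "x \<in> A"
    show "y * x - c x \<le> y * x0 - c x0"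
    proof (cases "x \<le> max B \<theta>")
      case True
      then show ?thesis using x0(2)[of x] x by (simp add: K_def)
    next
      case False
      then have "y * x - c x < y * \<theta> - c \<theta>"
        using B x cost_theta by simp
      also have "\<dots> \<le> y * x0 - c x0"
        using x0(2)[OF \<open>\<theta> \<in> K\<close>] by simp
      finally show ?thesis by simp
    qed
  qed
qed

lemma objective_le_phi:
  assumes "y \<ge> 0" "x \<in> A"
  shows "y * x - c x \<le> phi A c y"
  by (metis assms objective_attains_max phi_eq_argmax)

lemma phi_attained:
  assumes "y \<ge> 0"
  obtains x where "x \<in> A" "y * x - c x = phi A c y"
  by (metis assms objective_attains_max phi_eq_argmax)

lemma le_psi:
  assumes "y \<ge> 0" "\<And>x. x \<in> A \<Longrightarrow> y * x - c x = phi A c y \<Longrightarrow> z \<le> x"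
  shows "z \<le> psi A c y"
  using assms by (metis phi_attained le_psi_argmaxI)

lemma theta_le_psi: "y \<ge> 0 \<Longrightarrow> \<theta> \<le> psi A c y"
  using theta_min by (auto intro: le_psi)

lemma psi_0: "psi A c 0 = \<theta>"
proof -
  have "phi A c 0 = 0 * \<theta> - c \<theta>"
    using theta_in cost_theta cost_nonneg by (intro phi_eq_argmax) auto
  then have "psi A c 0 \<le> \<theta>"
    using bdd_below_A theta_in by (intro psi_le_argmax) auto
  then show ?thesis
    using theta_le_psi[of 0] by simp
qed

lemma argmax_lower_bound:
  assumes y: "y > 0" and x: "x \<in> A" "y * x - c x = phi A c y" and z: "z \<in> A"
  shows "z - c z / y \<le> x"
proof -
  have "y * z - c z \<le> y * x"
    using objective_le_phi[of y z] y x z cost_nonneg[OF x(1)] by simp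
  then show ?thesis
    using y by (simp add: field_simps)
qed

lemma eventually_less_psi_at_top:
  assumes z: "z \<in> A" and a: "a < z"
  shows "\<forall>\<^sub>F y in at_top. a < psi A c y"
proof -
  have "((\<lambda>y. z - c z / y) \<longlongrightarrow> z - 0) at_top"
    by (intro tendsto_diff tendsto_const tendsto_divide_0[OF tendsto_const]
        filterlim_at_top_imp_at_infinity filterlim_ident)
  then have "\<forall>\<^sub>F y in at_top. a < z - c z / y"
    using a by (auto intro: order_tendstoD)
  with eventually_gt_at_top[of 0] show ?thesis
  proof eventually_elim
    case (elim y)
    have "z - c z / y \<le> psi A c y"
      using elim(1) z by (intro le_psi argmax_lower_bound) auto
    with elim(2) show ?case by simp
  qed
qed

lemma cost_le_of_argmax:
  assumes "y \<ge> 0" "x \<in> A" "y * x - c x = phi A c y"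
  shows "c x \<le> y * (x - \<theta>)"
  using objective_le_phi[OF assms(1) theta_in] assms cost_theta by (simp add: algebra_simps)

lemma argmax_bounded_small_slope:
  obtains B where "\<theta> < B"
    "\<And>y x. 0 \<le> y \<Longrightarrow> y \<le> 1 \<Longrightarrow> x \<in> A \<Longrightarrow> y * x - c x = phi A c y \<Longrightarrow> x < B"
proof -
  obtain B where B: "\<And>x. B \<le> x \<Longrightarrow> x \<in> A \<Longrightarrow> 1 * x - c x < 1 * \<theta>"
    using eventually_objective_less_theta[of 1] by (auto simp: eventually_at_top_linorder)
  show thesis
  proof (rule that[of "max B (\<theta> + 1)"])
    fix y x assume y: "0 \<le> y" "y \<le> 1" and x: "x \<in> A" "y * x - c x = phi A c y"
    have "c x \<le> y * (x - \<theta>)"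
      using cost_le_of_argmax y x by blast
    also have "\<dots> \<le> x - \<theta>"
      using y theta_min x(1) by (simp add: mult_left_le_one_le)
    finally have "\<not> B \<le> x"
      using B[OF _ x(1)] by auto
    then show "x < max B (\<theta> + 1)" by simp
  qed simp
qed

lemma cost_bounded_away_from_zero:
  assumes pos: "\<forall>x\<in>A. x > \<theta> \<longrightarrow> c x > 0" and \<epsilon>: "\<epsilon> > 0"
  obtains \<eta> where "\<eta> > 0" "\<And>x. x \<in> A \<Longrightarrow> \<theta> + \<epsilon> \<le> x \<Longrightarrow> \<eta> \<le> c x"
proof (cases "A \<inter> {\<theta> + \<epsilon>..} = {}")
  case True
  then show thesis by (intro that[of 1]) auto
next
  case False
  define a where "a = Inf (A \<inter> {\<theta> + \<epsilon>..})"
  have "a \<in> A \<inter> {\<theta> + \<epsilon>..}"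
    unfolding a_def using False closed_A by (intro closed_contains_Inf) auto
  show thesis
  proof (rule that[of "c a"])
    show "c a > 0"
      using pos \<epsilon> \<open>a \<in> A \<inter> {\<theta> + \<epsilon>..}\<close> by auto
    fix x assume "x \<in> A" "\<theta> + \<epsilon> \<le> x"
    then have "a \<le> x"
      unfolding a_def by (intro cInf_lower) auto
    then show "c a \<le> c x"
      using mono_onD[OF mono] \<open>a \<in> A \<inter> {\<theta> + \<epsilon>..}\<close> \<open>x \<in> A\<close> by auto
  qed
qed

lemma eventually_psi_less_at_right_0:
  assumes pos: "\<forall>x\<in>A. x > \<theta> \<longrightarrow> c x > 0" and a: "\<theta> < a"
  shows "\<forall>\<^sub>F y in at_right 0. psi A c y < a"
proof -
  obtain \<eta> where \<eta>: "\<eta> > 0" "\<And>x. x \<in> A \<Longrightarrow> a \<le> x \<Longrightarrow> \<eta> \<le> c x"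
    using cost_bounded_away_from_zero[OF pos, of "a - \<theta>"] a by auto
  obtain B where B: "\<theta> < B"
    "\<And>y x. 0 \<le> y \<Longrightarrow> y \<le> 1 \<Longrightarrow> x \<in> A \<Longrightarrow> y * x - c x = phi A c y \<Longrightarrow> x < B"
    using argmax_bounded_small_slope by blast
  show ?thesis
    unfolding eventually_at_right_field
  proof (intro exI[of _ "min 1 (\<eta> / (B - \<theta>))"] conjI allI impI)
    show "0 < min 1 (\<eta> / (B - \<theta>))"
      using \<eta>(1) B(1) by simp
    fix y :: real assume "0 < y" "y < min 1 (\<eta> / (B - \<theta>))"
    then have y: "0 \<le> y" "y \<le> 1" "y * (B - \<theta>) < \<eta>"
      using B(1) by (auto simp: pos_less_divide_eq)
    obtain x where x: "x \<in> A" "y * x - c x = phi A c y"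
      using phi_attained[OF y(1)] by blast
    have "x < a"
    proof (rule ccontr)
      assume "\<not> x < a"
      then have "\<eta> \<le> y * (x - \<theta>)"
        using \<eta>(2) cost_le_of_argmax[OF y(1) x] x(1) by force
      also have "\<dots> \<le> y * (B - \<theta>)"
        using B(2)[OF y(1,2) x] y(1) by (simp add: mult_left_mono)
      finally show False using y(3) by simp
    qed
    then show "psi A c y < a"
      using psi_le_argmax[OF bdd_below_A x] by simp
  qed
qed

lemma psi_continuous_at_right_0:
  assumes pos: "\<forall>x\<in>A. x > \<theta> \<longrightarrow> c x > 0"
  shows "continuous (at_right 0) (psi A c)"
  unfolding continuous_within psi_0
proof (rule order_tendstoI)
  fix a assume "a < \<theta>"
  then show "\<forall>\<^sub>F y in at_right 0. a < psi A c y"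
    by (intro eventually_mono[OF eventually_at_right_less[of 0]]
        less_le_trans[OF \<open>a < \<theta>\<close>] theta_le_psi) simp
next
  fix a assume "\<theta> < a"
  then show "\<forall>\<^sub>F y in at_right 0. psi A c y < a"
    by (rule eventually_psi_less_at_right_0[OF pos])
qed

lemma phi_le_slope_Sup:
  assumes "bdd_above A" "y \<ge> 0"
  shows "phi A c y \<le> y * Sup A"
proof (rule phi_le)
  show "A \<noteq> {}" using theta_in by auto
  fix x assume "x \<in> A"
  then have "y * x \<le> y * Sup A"
    using assms by (intro mult_left_mono cSup_upper)
  then show "y * x - c x \<le> y * Sup A"
    using cost_nonneg[OF \<open>x \<in> A\<close>] by simp
qed

lemma INF_phi_eq_minf_if_negative:
  assumes neg: "\<forall>x\<in>A. x < 0"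
  shows "(INF y\<in>{0..}. ereal (phi A c y)) = - \<infinity>"
proof (rule ereal_bot)
  fix r :: real
  have bdd: "bdd_above A"
    using neg by (auto intro!: bdd_aboveI[where M = 0] less_imp_le)
  then have "Sup A \<in> A"
    using closed_contains_Sup[OF _ bdd closed_A] theta_in by auto
  then have "Sup A < 0" using neg by simp
  define y where "y = \<bar>r\<bar> / - Sup A"
  have "y \<ge> 0"
    unfolding y_def using \<open>Sup A < 0\<close> by (intro divide_nonneg_pos) auto
  have "phi A c y \<le> y * Sup A"
    using phi_le_slope_Sup[OF bdd \<open>y \<ge> 0\<close>] .
  also have "\<dots> = - \<bar>r\<bar>"
    unfolding y_def using \<open>Sup A < 0\<close> by simp
  finally have "ereal (phi A c y) \<le> ereal r" by simp
  then show "(INF y\<in>{0..}. ereal (phi A c y)) \<le> ereal r"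
    using \<open>y \<ge> 0\<close> by (auto intro: INF_lower2)
qed

lemma INF_phi_ge_if_nonneg:
  assumes x: "x \<in> A" "x \<ge> 0"
  shows "ereal (- c x) \<le> (INF y\<in>{0..}. ereal (phi A c y))"
proof (rule INF_greatest)
  fix y :: real assume "y \<in> {0..}"
  then have "0 \<le> y * x" "y * x - c x \<le> phi A c y"
    using objective_le_phi[of y x] x by auto
  then show "ereal (- c x) \<le> ereal (phi A c y)" by simp
qed

lemma neg_INF_phi_finite_iff:
  "- (INF y\<in>{0..}. ereal (phi A c y)) < \<infinity> \<longleftrightarrow> (\<exists>x\<in>A. x \<ge> 0)"
proof
  assume "- (INF y\<in>{0..}. ereal (phi A c y)) < \<infinity>"
  then show "\<exists>x\<in>A. x \<ge> 0"
    using INF_phi_eq_minf_if_negative by force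
next
  assume "\<exists>x\<in>A. x \<ge> 0"
  then obtain x where "x \<in> A" "x \<ge> 0" by blast
  then have "- (INF y\<in>{0..}. ereal (phi A c y)) \<le> ereal (c x)"
    using INF_phi_ge_if_nonneg ereal_uminus_le_reorder by fastforce
  then show "- (INF y\<in>{0..}. ereal (phi A c y)) < \<infinity>"
    using le_less_trans by fastforce
qed

lemma psi_at_top_unbounded:
  assumes "\<not> bounded A"
  shows "filterlim (psi A c) at_top at_top"
  unfolding filterlim_at_top_dense
proof
  fix a :: real
  obtain z where "z \<in> A" "a < z"
    using unbounded_exists_gt[OF assms] .
  then show "\<forall>\<^sub>F y in at_top. a < psi A c y"
    by (rule eventually_less_psi_at_top)
qed

lemma phi_at_top_unbounded:
  assumes "\<not> bounded A"
  shows "filterlim (phi A c) at_top at_top"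
proof -
  obtain z where z: "z \<in> A" "0 < z"
    using unbounded_exists_gt[OF assms] .
  have "filterlim (\<lambda>y. - c z + z * y) at_top at_top"
    by (rule filterlim_tendsto_add_at_top[OF tendsto_const
          filterlim_tendsto_pos_mult_at_top[OF tendsto_const z(2) filterlim_ident]])
  moreover have "\<forall>\<^sub>F y in at_top. - c z + z * y \<le> phi A c y"
    using eventually_ge_at_top[of 0]
    by eventually_elim (use objective_le_phi z(1) in \<open>simp add: mult.commute\<close>)
  ultimately show ?thesis
    by (rule filterlim_at_top_mono)
qed

lemma psi_tendsto_Sup_bounded:
  assumes "bounded A"
  shows "(psi A c \<longlongrightarrow> Sup A) at_top"
proof (rule order_tendstoI)
  fix a assume "a < Sup A"
  then obtain z where "z \<in> A" "a < z"
    using less_cSupE theta_in by blast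
  then show "\<forall>\<^sub>F y in at_top. a < psi A c y"
    by (rule eventually_less_psi_at_top)
next
  fix a assume "Sup A < a"
  show "\<forall>\<^sub>F y in at_top. psi A c y < a"
    using eventually_ge_at_top[of 0]
  proof eventually_elim
    case (elim y)
    then obtain x where x: "x \<in> A" "y * x - c x = phi A c y"
      using phi_attained by blast
    have "psi A c y \<le> x"
      using psi_le_argmax[OF bdd_below_A x] .
    also have "x \<le> Sup A"
      using x(1) assms by (simp add: bounded_imp_bdd_above cSup_upper)
    finally show ?case using \<open>Sup A < a\<close> by simp
  qed
qed

end

theorem proposition2:
  fixes A :: "real set" and c :: "real \<Rightarrow> real" and \<theta> :: real
  assumes closedA: "closed A"
    and theta_in: "\<theta> \<in> A"
    and theta_min: "\<forall>x\<in>A. \<theta> \<le> x"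
    and c_mono: "mono_on A c"
    and c_leftcont: "\<forall>x\<in>A. continuous (at x within (A \<inter> {..x})) c"
    and c_theta: "c \<theta> = 0"
    and c_pos: "\<forall>x\<in>A. x > \<theta> \<longrightarrow> c x > 0"
    and growth: "\<not> bounded A \<Longrightarrow>
       filterlim (\<lambda>y. Inf ((\<lambda>x. c x / x) ` {x \<in> A. y \<le> x})) at_top at_top"
  shows "continuous (at_right 0) (psi A c)
     \<and> (- (INF y\<in>{0..}. ereal (phi A c y)) < \<infinity> \<longleftrightarrow> (\<exists>x\<in>A. x \<ge> 0))
     \<and> (\<not> bounded A \<longrightarrow>
           filterlim (psi A c) at_top at_top \<and> filterlim (phi A c) at_top at_top)
     \<and> (bounded A \<longrightarrow> (psi A c \<longlongrightarrow> Sup A) at_top)"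
proof -
  interpret admissible_cost A c \<theta>
    using closedA theta_in theta_min c_mono c_leftcont c_theta growth by unfold_locales
  show ?thesis
    using psi_continuous_at_right_0[OF c_pos] neg_INF_phi_finite_iff psi_at_top_unbounded
      phi_at_top_unbounded psi_tendsto_Sup_bounded
    by blast
qed

end
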